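(* Let $\mathcal A: f=0$ be an arrangement of $d$ lines in $\mathbb P^2$ and let $m$ be the multiplicity of one of its intersection points. Then either $mdr(f)=d-m$, or $mdr(f)\le d-m-1$ and one of the following two cases occurs: (1) $mdr(f)\le m-1$; then in fact $mdr(f)=m-1$, one has $2m<d+1$, and $\mathcal A$ is free with exponents $d_1=mdr(f)=m-1$ and $d_2=d-m$; (2) $m\le mdr(f)\le d-m-1$, in particular $2m<d$.
   Context: A line arrangement $\mathcal A: f=0$ is a finite set of distinct lines, $f\in\mathbb C[x,y,z]$ the product of their linear forms, $d=\deg f$ the number of lines. The multiplicity of an intersection point is the number of lines of $\mathcal A$ through it. $mdr(f)$ is the smallest integer $r\ge 0$ such that there exist homogeneous $a,b,c$ of degree $r$, not all zero, with $af_x+bf_y+cf_z=0$. The curve is free if the module $AR(f)=\{(a,b,c)\in S^3: af_x+bf_y+cf_z=0\}$ is a free $S$-module (of rank 2) generated by homogeneous syzygies of degrees $d_1\le d_2$, called the exponents. *)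

theory Defs
  imports Complex_Main "HOL-Library.Poly_Mapping" "HOL-Library.Product_Plus"
begin

text \<open>Polynomials in S = C[x,y,z]: finitely supported maps from exponent triples
 (i,j,k) (standing for x^i y^j z^k) to coefficients; multiplication is convolution.\<close>
type_synonym poly3 = "(nat \<times> nat \<times> nat) \<Rightarrow>\<^sub>0 complex"

definition linform :: "complex \<times> complex \<times> complex \<Rightarrow> poly3" where
  "linform v = (case v of (a, b, c) \<Rightarrow>
     Poly_Mapping.single (1,0,0) a + Poly_Mapping.single (0,1,0) b + Poly_Mapping.single (0,0,1) c)"

definition dx :: "poly3 \<Rightarrow> poly3" where
  "dx p = (\<Sum>t\<in>Poly_Mapping.keys p. case t of (i,j,k) \<Rightarrow> Poly_Mapping.single (i - 1, j, k) (of_nat i * Poly_Mapping.lookup p t))"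
definition dy :: "poly3 \<Rightarrow> poly3" where
  "dy p = (\<Sum>t\<in>Poly_Mapping.keys p. case t of (i,j,k) \<Rightarrow> Poly_Mapping.single (i, j - 1, k) (of_nat j * Poly_Mapping.lookup p t))"
definition dz :: "poly3 \<Rightarrow> poly3" where
  "dz p = (\<Sum>t\<in>Poly_Mapping.keys p. case t of (i,j,k) \<Rightarrow> Poly_Mapping.single (i, j, k - 1) (of_nat k * Poly_Mapping.lookup p t))"

text \<open>homogeneous of degree r (the zero polynomial is homogeneous of every degree)\<close>
definition homog :: "nat \<Rightarrow> poly3 \<Rightarrow> bool" where
  "homog r p \<longleftrightarrow> (\<forall>(i,j,k)\<in>Poly_Mapping.keys p. i + j + k = r)"

definition AR :: "poly3 \<Rightarrow> (poly3 \<times> poly3 \<times> poly3) set" where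
  "AR f = {(a,b,c). a * dx f + b * dy f + c * dz f = 0}"

definition homog_syz :: "poly3 \<Rightarrow> nat \<Rightarrow> poly3 \<times> poly3 \<times> poly3 \<Rightarrow> bool" where
  "homog_syz f r s \<longleftrightarrow> s \<in> AR f \<and> (case s of (a,b,c) \<Rightarrow> homog r a \<and> homog r b \<and> homog r c)"

definition mdr :: "poly3 \<Rightarrow> nat" where
  "mdr f = (LEAST r. \<exists>s. homog_syz f r s \<and> s \<noteq> (0,0,0))"

definition smul3 :: "poly3 \<Rightarrow> poly3 \<times> poly3 \<times> poly3 \<Rightarrow> poly3 \<times> poly3 \<times> poly3" where
  "smul3 g s = (case s of (a,b,c) \<Rightarrow> (g * a, g * b, g * c))"

definition add3 :: "poly3 \<times> poly3 \<times> poly3 \<Rightarrow> poly3 \<times> poly3 \<times> poly3 \<Rightarrow> poly3 \<times> poly3 \<times> poly3" where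
  "add3 s t = (case s of (a,b,c) \<Rightarrow> case t of (a',b',c') \<Rightarrow> (a + a', b + b', c + c'))"

definition free_with_exponents :: "poly3 \<Rightarrow> nat \<Rightarrow> nat \<Rightarrow> bool" where
  "free_with_exponents f d1 d2 \<longleftrightarrow> d1 \<le> d2 \<and>
     (\<exists>r1 r2. homog_syz f d1 r1 \<and> homog_syz f d2 r2 \<and>
        (\<forall>s\<in>AR f. \<exists>g1 g2. s = add3 (smul3 g1 r1) (smul3 g2 r2)) \<and>
        (\<forall>g1 g2. add3 (smul3 g1 r1) (smul3 g2 r2) = (0,0,0) \<longrightarrow> g1 = 0 \<and> g2 = 0))"

definition proportional :: "complex \<times> complex \<times> complex \<Rightarrow> complex \<times> complex \<times> complex \<Rightarrow> bool" where
  "proportional u v \<longleftrightarrow> (\<exists>t::complex. t \<noteq> 0 \<and> v = (case u of (a,b,c) \<Rightarrow> (t*a, t*b, t*c)))"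

definition line_arrangement :: "(complex \<times> complex \<times> complex) list \<Rightarrow> bool" where
  "line_arrangement L \<longleftrightarrow> (\<forall>v\<in>set L. v \<noteq> (0,0,0)) \<and>
     (\<forall>i<length L. \<forall>j<length L. i \<noteq> j \<longrightarrow> \<not> proportional (L!i) (L!j))"

definition arr_poly :: "(complex \<times> complex \<times> complex) list \<Rightarrow> poly3" where
  "arr_poly L = prod_list (map linform L)"

definition on_line :: "complex \<times> complex \<times> complex \<Rightarrow> complex \<times> complex \<times> complex \<Rightarrow> bool" where
  "on_line p v \<longleftrightarrow> (case p of (x,y,z) \<Rightarrow> case v of (a,b,c) \<Rightarrow> a*x + b*y + c*z = 0)"

definition mult_pt :: "(complex \<times> complex \<times> complex) list \<Rightarrow> complex \<times> complex \<times> complex \<Rightarrow> nat" where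
  "mult_pt L p = card {i. i < length L \<and> on_line p (L!i)}"

definition intersection_point :: "(complex \<times> complex \<times> complex) list \<Rightarrow> complex \<times> complex \<times> complex \<Rightarrow> bool" where
  "intersection_point L p \<longleftrightarrow> p \<noteq> (0,0,0) \<and> mult_pt L p \<ge> 2"

end

theory Submission
  imports Defs "HOL-Library.Product_Lexorder" "HOL-Computational_Algebra.Polynomial_Factorial"
    "HOL-Computational_Algebra.Field_as_Ring"
begin

text \<open>Let \<open>g\<close> be the product of the \<open>m\<close> lines through \<open>p\<close> and \<open>h\<close> the product of the others,
 so \<open>f = g h\<close>. Euler's formula and \<open>\<partial>\<^sub>p g = 0\<close> yield the syzygy \<open>\<delta> = (\<partial>\<^sub>p h) X - d h p\<close>
 of degree \<open>d - m\<close>, so \<open>mdr f \<le> d - m\<close>. For any syzygy \<open>\<rho>\<close> every line through \<open>p\<close> divides the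
 determinant \<open>W \<rho> = det(\<rho>, X, p)\<close>, hence \<open>g\<close> divides \<open>W \<rho>\<close>. If \<open>W \<rho> = 0\<close> then
 \<open>\<rho> = u X + w p\<close>, and since \<open>h\<close> is coprime to \<open>\<partial>\<^sub>p h\<close> this forces \<open>\<rho>\<close> to be a multiple of
 \<open>\<delta>\<close>. So a syzygy of degree \<open>r < d - m\<close> has \<open>W \<rho> \<noteq> 0\<close> of degree \<open>r + 1\<close> divisible by \<open>g\<close>,
 i.e. \<open>r \<ge> m - 1\<close>; for \<open>r = m - 1\<close> we get \<open>W \<rho> = c g\<close> with \<open>c \<noteq> 0\<close>, and \<open>\<sigma> \<mapsto> W \<sigma> / (c g)\<close>
 exhibits \<open>\<rho>, \<delta>\<close> as a basis of \<open>AR(f)\<close>.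

 Unique factorisation in \<open>S\<close> is imported by identifying \<open>S\<close> with \<open>\<complex>[x][y][z]\<close>.\<close>

text \<open>With the lexicographic order on exponents, the library's \<open>ring_no_zero_divisors\<close> instance
 of \<open>poly_mapping\<close> applies to \<open>poly3\<close>.\<close>

instance prod :: ("{ordered_cancel_comm_monoid_add,linorder}", "{ordered_cancel_comm_monoid_add,linorder}")
  ordered_cancel_comm_monoid_add
  by intro_classes (auto simp: less_eq_prod_def add_strict_left_mono add_left_mono split: prod.splits)

section \<open>Additive maps on finitely supported functions\<close>

definition sum_keys :: "('a \<Rightarrow> 'c::zero \<Rightarrow> 'b::comm_monoid_add) \<Rightarrow> ('a \<Rightarrow>\<^sub>0 'c) \<Rightarrow> 'b" where
  "sum_keys G p = (\<Sum>t\<in>Poly_Mapping.keys p. G t (Poly_Mapping.lookup p t))"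

lemma sum_keys_superset:
  assumes "finite S" "Poly_Mapping.keys p \<subseteq> S" "\<And>t. G t 0 = 0"
  shows "sum_keys G p = (\<Sum>t\<in>S. G t (Poly_Mapping.lookup p t))"
  unfolding sum_keys_def by (rule sum.mono_neutral_left) (auto simp: assms in_keys_iff)

lemma sum_keys_add:
  fixes G :: "'a \<Rightarrow> 'c::monoid_add \<Rightarrow> 'b::comm_monoid_add"
  assumes "\<And>t a b. G t (a + b) = G t a + G t b" "\<And>t. G t 0 = 0"
  shows "sum_keys G (p + q) = sum_keys G p + sum_keys G q"
proof -
  let ?S = "Poly_Mapping.keys p \<union> Poly_Mapping.keys q"
  have "sum_keys G (p + q) = (\<Sum>t\<in>?S. G t (Poly_Mapping.lookup (p + q) t))"
    by (rule sum_keys_superset) (use keys_add[of p q] assms(2) in auto)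
  also have "\<dots> = (\<Sum>t\<in>?S. G t (Poly_Mapping.lookup p t)) + (\<Sum>t\<in>?S. G t (Poly_Mapping.lookup q t))"
    by (simp add: lookup_add assms(1) sum.distrib)
  also have "\<dots> = sum_keys G p + sum_keys G q"
    using sum_keys_superset[of ?S p G] sum_keys_superset[of ?S q G] by (auto simp: assms(2))
  finally show ?thesis .
qed

lemma sum_keys_single:
  assumes "\<And>t. G t 0 = 0"
  shows "sum_keys G (Poly_Mapping.single t a) = G t a"
  using assms by (cases "a = 0") (auto simp: sum_keys_def)

lemma poly_mapping_sum_singles:
  "p = (\<Sum>t\<in>Poly_Mapping.keys p. Poly_Mapping.single t (Poly_Mapping.lookup p t))"
  by (rule poly_mapping_eqI) (auto simp: lookup_sum lookup_single when_def in_keys_iff)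

lemma additive_eq_sum_keys:
  fixes F :: "('a \<Rightarrow>\<^sub>0 'c::comm_monoid_add) \<Rightarrow> 'b::cancel_comm_monoid_add"
  assumes "\<And>p q. F (p + q) = F p + F q"
  shows "F p = sum_keys (\<lambda>t a. F (Poly_Mapping.single t a)) p"
proof -
  have "F 0 = 0" using assms[of 0 0] by simp
  have "F p = F (\<Sum>t\<in>Poly_Mapping.keys p. Poly_Mapping.single t (Poly_Mapping.lookup p t))"
    by (rule arg_cong[where f = F, OF poly_mapping_sum_singles])
  also have "\<dots> = sum_keys (\<lambda>t a. F (Poly_Mapping.single t a)) p"
    unfolding sum_keys_def o_def
    by (rule sum_comp_morphism[of F "\<lambda>t. Poly_Mapping.single t (Poly_Mapping.lookup p t)", symmetric,
          unfolded o_def, OF \<open>F 0 = 0\<close> assms])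
  finally show ?thesis .
qed

lemma additive_eqI:
  fixes F G :: "('a \<Rightarrow>\<^sub>0 'c::comm_monoid_add) \<Rightarrow> 'b::cancel_comm_monoid_add"
  assumes "\<And>p q. F (p + q) = F p + F q" "\<And>p q. G (p + q) = G p + G q"
    and "\<And>t a. F (Poly_Mapping.single t a) = G (Poly_Mapping.single t a)"
  shows "F p = G p"
  using additive_eq_sum_keys[of F p, OF assms(1)] additive_eq_sum_keys[of G p, OF assms(2)]
  by (simp add: assms(3))

lemma biadditive_eqI:
  fixes F G :: "('a \<Rightarrow>\<^sub>0 'c::comm_monoid_add) \<Rightarrow> ('a \<Rightarrow>\<^sub>0 'c) \<Rightarrow> 'b::cancel_comm_monoid_add"
  assumes "\<And>p q r. F (p + q) r = F p r + F q r" "\<And>p q r. F r (p + q) = F r p + F r q"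
    and "\<And>p q r. G (p + q) r = G p r + G q r" "\<And>p q r. G r (p + q) = G r p + G r q"
    and "\<And>s a t b. F (Poly_Mapping.single s a) (Poly_Mapping.single t b)
                  = G (Poly_Mapping.single s a) (Poly_Mapping.single t b)"
  shows "F p q = G p q"
proof -
  have singles: "F (Poly_Mapping.single s a) q = G (Poly_Mapping.single s a) q" for s a
    by (rule additive_eqI[where F = "F (Poly_Mapping.single s a)" and G = "G (Poly_Mapping.single s a)"])
       (rule assms(2), rule assms(4), rule assms(5))
  show ?thesis
    by (rule additive_eqI[where F = "\<lambda>p. F p q" and G = "\<lambda>p. G p q"]) (rule assms(1), rule assms(3), rule singles)
qed

section \<open>The polynomial ring \<open>S\<close> as an iterated univariate polynomial ring\<close>

definition nested_monom :: "nat \<times> nat \<times> nat \<Rightarrow> complex \<Rightarrow> complex poly poly poly" where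
  "nested_monom t a = (case t of (i,j,k) \<Rightarrow> monom (monom (monom a i) j) k)"

definition nested :: "poly3 \<Rightarrow> complex poly poly poly" where
  "nested = sum_keys nested_monom"

lemma nested_monom_0 [simp]: "nested_monom t 0 = 0"
  by (cases t) (auto simp: nested_monom_def)

lemma nested_monom_add: "nested_monom t (a + b) = nested_monom t a + nested_monom t b"
  by (cases t) (auto simp: nested_monom_def add_monom)

lemma nested_monom_mult: "nested_monom (s + t) (a * b) = nested_monom s a * nested_monom t b"
  by (cases s; cases t) (auto simp: nested_monom_def add_Pair mult_monom)

lemma nested_add: "nested (p + q) = nested p + nested q"
  unfolding nested_def by (rule sum_keys_add) (simp_all add: nested_monom_add)

lemma nested_single [simp]: "nested (Poly_Mapping.single t a) = nested_monom t a"
  unfolding nested_def by (rule sum_keys_single) simp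

lemma nested_mult: "nested (p * q) = nested p * nested q"
  by (rule biadditive_eqI[where F = "\<lambda>p q. nested (p * q)" and G = "\<lambda>p q. nested p * nested q"])
     (auto simp: nested_add distrib_left distrib_right mult_single nested_monom_mult)

lemma nested_coeff: "coeff (coeff (coeff (nested p) k) j) i = Poly_Mapping.lookup p (i,j,k)"
  by (rule additive_eqI[where F = "\<lambda>p. coeff (coeff (coeff (nested p) k) j) i"])
     (auto simp: nested_add lookup_add lookup_single when_def nested_monom_def coeff_monom split: prod.splits)

lemma nested_inj: "nested p = nested q \<Longrightarrow> p = q"
  by (rule poly_mapping_eqI) (metis nested_coeff prod_cases3)

lemma nested_surj: "\<exists>p. nested p = q"
proof -
  let ?I = "range nested"
  have add: "a \<in> ?I \<Longrightarrow> b \<in> ?I \<Longrightarrow> a + b \<in> ?I" for a b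
    by (auto simp flip: nested_add)
  have mult: "a \<in> ?I \<Longrightarrow> b \<in> ?I \<Longrightarrow> a * b \<in> ?I" for a b
    by (auto simp flip: nested_mult)
  have single: "nested_monom t c \<in> ?I" for t c
    by (metis nested_single rangeI)
  have x: "[:[:[:0,1:]:]:] \<in> ?I" and y: "[:[:0,1:]:] \<in> ?I" and z: "[:0,1:] \<in> ?I"
    and const: "[:[:[:c:]:]:] \<in> ?I" for c
    using single[of "(1,0,0)" 1] single[of "(0,1,0)" 1] single[of "(0,0,1)" 1] single[of "(0,0,0)" c]
    by (simp_all add: nested_monom_def monom_Suc monom_0 one_pCons)
  have pCons_eq: "pCons c a = [:c:] + [:0,1:] * a" for c and a :: "'a::comm_ring_1 poly"
    by simp
  have in_x: "[:[:a:]:] \<in> ?I" for a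
  proof (induction a)
    case (pCons c a)
    have "[:[:pCons c a:]:] = [:[:[:c:]:]:] + [:[:[:0,1:]:]:] * [:[:a:]:]"
      by (simp only: pCons_eq[of c a]) simp
    then show ?case by (metis add mult const x pCons.IH)
  qed (use const[of 0] in simp)
  have in_xy: "[:a:] \<in> ?I" for a
  proof (induction a)
    case (pCons c a)
    have "[:pCons c a:] = [:[:c:]:] + [:[:0,1:]:] * [:a:]"
      by (simp only: pCons_eq[of c a]) simp
    then show ?case by (metis add mult in_x y pCons.IH)
  qed (use const[of 0] in simp)
  have "a \<in> ?I" for a
  proof (induction a)
    case (pCons c a)
    then show ?case by (metis add mult in_xy z pCons_eq)
  qed (use const[of 0] in simp)
  then show ?thesis by (metis rangeE)
qed

lemma nested_dvd_iff: "nested a dvd nested b \<longleftrightarrow> a dvd b"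
proof
  assume "nested a dvd nested b"
  then obtain r where "nested b = nested a * r" by blast
  moreover obtain s where "nested s = r" using nested_surj by blast
  ultimately have "b = a * s" by (metis nested_inj nested_mult)
  then show "a dvd b" ..
next
  assume "a dvd b"
  then show "nested a dvd nested b" by (metis dvd_def nested_mult)
qed

lemma nested_linform: "nested (linform (a,b,c)) = [:[:[:0,a:], [:b:]:], [:[:c:]:]:]"
  by (simp add: linform_def nested_add nested_monom_def monom_Suc monom_0)

lemma prime_elem_linear_unit_poly:
  fixes a u :: "'a::{idom_divide,ring_gcd,factorial_semiring,semiring_Gcd,semiring_gcd_mult_normalize}"
  shows "is_unit u \<Longrightarrow> prime_elem [:a, u:]"
  by (auto intro: prime_elem_linear_poly is_unit_right_imp_coprime)

lemma prime_elem_nested_linform: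
  assumes "v \<noteq> (0,0,0)"
  shows "prime_elem (nested (linform v))"
proof -
  obtain a b c where v: "v = (a,b,c)" by (cases v) auto
  consider "c \<noteq> 0" | "c = 0" "b \<noteq> 0" | "c = 0" "b = 0" "a \<noteq> 0" using assms v by auto
  then show ?thesis
  proof cases
    case 1
    then show ?thesis unfolding v nested_linform
      by (intro prime_elem_linear_unit_poly) (simp add: is_unit_const_poly_iff dvd_field_iff)
  next
    case 2
    then show ?thesis unfolding v nested_linform
      by (simp add: prime_elem_const_poly_iff prime_elem_linear_unit_poly is_unit_const_poly_iff dvd_field_iff)
  next
    case 3
    then show ?thesis unfolding v nested_linform
      by (simp add: prime_elem_const_poly_iff prime_elem_linear_unit_poly dvd_field_iff)
  qed
qed

lemma linform_dvd_mult:
  assumes "v \<noteq> (0,0,0)" "linform v dvd a * b"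
  shows "linform v dvd a \<or> linform v dvd b"
  using assms prime_elem_nested_linform[OF assms(1)]
  by (simp add: nested_dvd_iff[symmetric] nested_mult prime_elem_dvd_mult_iff)

section \<open>Homogeneous polynomials\<close>

definition monom_degree :: "nat \<times> nat \<times> nat \<Rightarrow> nat" where
  "monom_degree t = (case t of (i,j,k) \<Rightarrow> i + j + k)"

definition const :: "complex \<Rightarrow> poly3" where
  "const c = Poly_Mapping.single (0,0,0) c"

definition X1 :: poly3 where "X1 = Poly_Mapping.single (1,0,0) 1"
definition X2 :: poly3 where "X2 = Poly_Mapping.single (0,1,0) 1"
definition X3 :: poly3 where "X3 = Poly_Mapping.single (0,0,1) 1"

definition order_ge :: "nat \<Rightarrow> poly3 \<Rightarrow> bool" where
  "order_ge r p \<longleftrightarrow> (\<forall>t\<in>Poly_Mapping.keys p. r \<le> monom_degree t)"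

lemma monom_degree_add [simp]: "monom_degree (s + t) = monom_degree s + monom_degree t"
  by (cases s; cases t) (simp add: monom_degree_def add_Pair)

lemma homog_iff: "homog r p \<longleftrightarrow> (\<forall>t\<in>Poly_Mapping.keys p. monom_degree t = r)"
  unfolding homog_def monom_degree_def by auto

lemma zero_monom_exp: "(0::nat \<times> nat \<times> nat) = (0,0,0)"
  by (simp add: zero_prod_def)

lemma const_0 [simp]: "const 0 = 0" by (simp add: const_def)
lemma const_1 [simp]: "const 1 = 1" by (simp add: const_def zero_monom_exp[symmetric])
lemma const_add: "const (a + b) = const a + const b" by (simp add: const_def single_add)
lemma const_mult: "const (a * b) = const a * const b" by (simp add: const_def mult_single)
lemma const_uminus: "const (- a) = - const a" by (simp add: const_def single_uminus)
lemma const_eq_0_iff [simp]: "const a = 0 \<longleftrightarrow> a = 0"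
  unfolding const_def by (metis lookup_single_eq lookup_zero single_zero)

lemma const_mult_inverse: "a \<noteq> 0 \<Longrightarrow> const a * const (1 / a) = 1"
  by (simp flip: const_mult)

lemma const_mult_single: "const a * Poly_Mapping.single t c = Poly_Mapping.single t (a * c)"
  by (cases t) (simp add: const_def mult_single add_Pair)

lemma linform_eq: "linform (a,b,c) = const a * X1 + const b * X2 + const c * X3"
  by (simp add: linform_def const_def X1_def X2_def X3_def mult_single add_Pair)

lemma homog_0 [simp]: "homog r 0"
  by (simp add: homog_iff)

lemma homog_add: "homog r a \<Longrightarrow> homog r b \<Longrightarrow> homog r (a + b)"
  unfolding homog_iff using keys_add[of a b] by blast

lemma homog_diff: "homog r a \<Longrightarrow> homog r b \<Longrightarrow> homog r (a - b)"
  unfolding homog_iff using keys_add[of a "- b"] by (auto simp: keys_minus)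

lemma homog_mult:
  assumes "homog r a" "homog s b"
  shows "homog (r + s) (a * b)"
  unfolding homog_iff
proof
  fix t assume "t \<in> Poly_Mapping.keys (a * b)"
  then obtain x y where "t = x + y" "x \<in> Poly_Mapping.keys a" "y \<in> Poly_Mapping.keys b"
    using keys_mult[of a b] by blast
  then show "monom_degree t = r + s" using assms by (simp add: homog_iff)
qed

lemma homog_sum: "(\<And>x. x \<in> S \<Longrightarrow> homog r (f x)) \<Longrightarrow> homog r (sum f S)"
  by (induction S rule: infinite_finite_induct) (auto intro: homog_add)

lemma homog_single: "homog (monom_degree t) (Poly_Mapping.single t c)"
  by (simp add: homog_iff)

lemma homog_const: "homog 0 (const c)"
  unfolding const_def using homog_single[of "(0,0,0)" c] by (simp add: monom_degree_def)

lemma homog_const_mult: "homog r a \<Longrightarrow> homog r (const c * a)"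
  using homog_mult[OF homog_const, of r a c] by simp

lemma homog_X1: "homog 1 X1" and homog_X2: "homog 1 X2" and homog_X3: "homog 1 X3"
  unfolding X1_def X2_def X3_def by (simp_all add: homog_iff monom_degree_def)

lemma homog_linform: "homog 1 (linform v)"
proof -
  obtain a b c where v: "v = (a,b,c)" by (cases v) auto
  show ?thesis
    unfolding v linform_eq by (intro homog_add homog_const_mult homog_X1 homog_X2 homog_X3)
qed

lemma homog_arr_poly: "homog (length M) (arr_poly M)"
proof (induction M)
  case Nil
  then show ?case using homog_const[of 1] by (simp add: arr_poly_def)
next
  case (Cons a M)
  then show ?case using homog_mult[OF homog_linform Cons.IH, of a] by (simp add: arr_poly_def)
qed

lemma order_ge_mult:
  assumes "order_ge r a" "order_ge s b"
  shows "order_ge (r + s) (a * b)"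
  unfolding order_ge_def
proof
  fix t assume "t \<in> Poly_Mapping.keys (a * b)"
  then obtain x y where "t = x + y" "x \<in> Poly_Mapping.keys a" "y \<in> Poly_Mapping.keys b"
    using keys_mult[of a b] by blast
  then show "r + s \<le> monom_degree t" using assms by (simp add: order_ge_def add_mono)
qed

lemma homog_imp_order_ge: "homog r a \<Longrightarrow> order_ge r a"
  by (simp add: homog_iff order_ge_def)

lemma order_ge_0 [simp]: "order_ge 0 a"
  by (simp add: order_ge_def)

lemma homog_order_ge_eq_0: "homog r a \<Longrightarrow> order_ge s a \<Longrightarrow> r < s \<Longrightarrow> a = 0"
  unfolding homog_iff order_ge_def by (metis all_not_in_conv keys_eq_empty not_le)

lemma homog_factor_degree_le:
  assumes "homog r (v * b)" "homog e b" "v * b \<noteq> 0"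
  shows "e \<le> r"
  using homog_order_ge_eq_0[OF assms(1) order_ge_mult[OF order_ge_0 homog_imp_order_ge[OF assms(2)]]] assms(3)
  by fastforce

lemma order_ge_1_sub_const: "order_ge 1 (v - const (Poly_Mapping.lookup v (0,0,0)))"
proof -
  have "Poly_Mapping.lookup (v - const (Poly_Mapping.lookup v (0,0,0))) (0,0,0) = 0"
    by (simp add: const_def lookup_minus)
  then show ?thesis unfolding order_ge_def
    by (metis One_nat_def add_is_0 case_prod_conv in_keys_iff less_one not_le prod_cases3 monom_degree_def)
qed

lemma homog_quotient_const:
  assumes "homog e (v * b)" "homog e b" "b \<noteq> 0"
  obtains c where "v = const c"
proof -
  define c where "c = Poly_Mapping.lookup v (0,0,0)"
  have "order_ge (1 + e) ((v - const c) * b)"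
    unfolding c_def by (rule order_ge_mult[OF order_ge_1_sub_const homog_imp_order_ge[OF assms(2)]])
  moreover have "homog e ((v - const c) * b)"
    using assms(1,2) by (simp add: left_diff_distrib homog_diff homog_const_mult)
  ultimately have "(v - const c) * b = 0" by (intro homog_order_ge_eq_0[of e _ "1 + e"]) simp_all
  then have "v = const c" using assms(3) by simp
  then show ?thesis by (rule that)
qed

section \<open>Partial derivatives and Euler's formula\<close>

definition dx_single :: "nat \<times> nat \<times> nat \<Rightarrow> complex \<Rightarrow> poly3" where
  "dx_single t c = (case t of (i,j,k) \<Rightarrow> Poly_Mapping.single (i - 1, j, k) (of_nat i * c))"
definition dy_single :: "nat \<times> nat \<times> nat \<Rightarrow> complex \<Rightarrow> poly3" where
  "dy_single t c = (case t of (i,j,k) \<Rightarrow> Poly_Mapping.single (i, j - 1, k) (of_nat j * c))"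
definition dz_single :: "nat \<times> nat \<times> nat \<Rightarrow> complex \<Rightarrow> poly3" where
  "dz_single t c = (case t of (i,j,k) \<Rightarrow> Poly_Mapping.single (i, j, k - 1) (of_nat k * c))"

lemma dx_eq_sum_keys: "dx p = sum_keys dx_single p" by (simp add: dx_def sum_keys_def dx_single_def)
lemma dy_eq_sum_keys: "dy p = sum_keys dy_single p" by (simp add: dy_def sum_keys_def dy_single_def)
lemma dz_eq_sum_keys: "dz p = sum_keys dz_single p" by (simp add: dz_def sum_keys_def dz_single_def)

lemma dx_add: "dx (p + q) = dx p + dx q"
  unfolding dx_eq_sum_keys
  by (rule sum_keys_add) (auto simp: dx_single_def single_add distrib_left split: prod.splits)
lemma dy_add: "dy (p + q) = dy p + dy q"
  unfolding dy_eq_sum_keys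
  by (rule sum_keys_add) (auto simp: dy_single_def single_add distrib_left split: prod.splits)
lemma dz_add: "dz (p + q) = dz p + dz q"
  unfolding dz_eq_sum_keys
  by (rule sum_keys_add) (auto simp: dz_single_def single_add distrib_left split: prod.splits)

lemma dx_single: "dx (Poly_Mapping.single (i,j,k) c) = Poly_Mapping.single (i - 1, j, k) (of_nat i * c)"
  unfolding dx_eq_sum_keys by (subst sum_keys_single) (auto simp: dx_single_def)
lemma dy_single: "dy (Poly_Mapping.single (i,j,k) c) = Poly_Mapping.single (i, j - 1, k) (of_nat j * c)"
  unfolding dy_eq_sum_keys by (subst sum_keys_single) (auto simp: dy_single_def)
lemma dz_single: "dz (Poly_Mapping.single (i,j,k) c) = Poly_Mapping.single (i, j, k - 1) (of_nat k * c)"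
  unfolding dz_eq_sum_keys by (subst sum_keys_single) (auto simp: dz_single_def)

lemma dx_mult: "dx (p * q) = dx p * q + p * dx q"
proof (rule biadditive_eqI[where F = "\<lambda>p q. dx (p * q)" and G = "\<lambda>p q. dx p * q + p * dx q"])
  fix s t :: "nat \<times> nat \<times> nat" and a b :: complex
  obtain i j k i' j' k' where "s = (i,j,k)" "t = (i',j',k')" by (cases s; cases t) auto
  then show "dx (Poly_Mapping.single s a * Poly_Mapping.single t b) =
    dx (Poly_Mapping.single s a) * Poly_Mapping.single t b + Poly_Mapping.single s a * dx (Poly_Mapping.single t b)"
    by (cases "i = 0"; cases "i' = 0")
       (simp_all add: mult_single add_Pair dx_single single_add[symmetric] algebra_simps)
qed (simp_all add: dx_add algebra_simps)

lemma dy_mult: "dy (p * q) = dy p * q + p * dy q"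
proof (rule biadditive_eqI[where F = "\<lambda>p q. dy (p * q)" and G = "\<lambda>p q. dy p * q + p * dy q"])
  fix s t :: "nat \<times> nat \<times> nat" and a b :: complex
  obtain i j k i' j' k' where "s = (i,j,k)" "t = (i',j',k')" by (cases s; cases t) auto
  then show "dy (Poly_Mapping.single s a * Poly_Mapping.single t b) =
    dy (Poly_Mapping.single s a) * Poly_Mapping.single t b + Poly_Mapping.single s a * dy (Poly_Mapping.single t b)"
    by (cases "j = 0"; cases "j' = 0")
       (simp_all add: mult_single add_Pair dy_single single_add[symmetric] algebra_simps)
qed (simp_all add: dy_add algebra_simps)

lemma dz_mult: "dz (p * q) = dz p * q + p * dz q"
proof (rule biadditive_eqI[where F = "\<lambda>p q. dz (p * q)" and G = "\<lambda>p q. dz p * q + p * dz q"])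
  fix s t :: "nat \<times> nat \<times> nat" and a b :: complex
  obtain i j k i' j' k' where "s = (i,j,k)" "t = (i',j',k')" by (cases s; cases t) auto
  then show "dz (Poly_Mapping.single s a * Poly_Mapping.single t b) =
    dz (Poly_Mapping.single s a) * Poly_Mapping.single t b + Poly_Mapping.single s a * dz (Poly_Mapping.single t b)"
    by (cases "k = 0"; cases "k' = 0")
       (simp_all add: mult_single add_Pair dz_single single_add[symmetric] algebra_simps)
qed (simp_all add: dz_add algebra_simps)

lemma homog_dx: "homog r q \<Longrightarrow> homog (r - 1) (dx q)"
  unfolding dx_eq_sum_keys sum_keys_def
  by (intro homog_sum) (auto simp: dx_single_def homog_iff monom_degree_def split: prod.splits)
lemma homog_dy: "homog r q \<Longrightarrow> homog (r - 1) (dy q)"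
  unfolding dy_eq_sum_keys sum_keys_def
  by (intro homog_sum) (auto simp: dy_single_def homog_iff monom_degree_def split: prod.splits)
lemma homog_dz: "homog r q \<Longrightarrow> homog (r - 1) (dz q)"
  unfolding dz_eq_sum_keys sum_keys_def
  by (intro homog_sum) (auto simp: dz_single_def homog_iff monom_degree_def split: prod.splits)

lemma homog_0_imp_dx_dy_dz_0: "homog 0 q \<Longrightarrow> dx q = 0 \<and> dy q = 0 \<and> dz q = 0"
  unfolding dx_eq_sum_keys dy_eq_sum_keys dz_eq_sum_keys sum_keys_def
  by (auto intro!: sum.neutral simp: dx_single_def dy_single_def dz_single_def homog_iff monom_degree_def)

lemma euler_single:
  "X1 * dx (Poly_Mapping.single t c) + X2 * dy (Poly_Mapping.single t c) + X3 * dz (Poly_Mapping.single t c)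
   = const (of_nat (monom_degree t)) * Poly_Mapping.single t c"
proof -
  obtain i j k where t: "t = (i,j,k)" by (cases t) auto
  have "X1 * Poly_Mapping.single (i - 1, j, k) (of_nat i * c) = Poly_Mapping.single (i,j,k) (of_nat i * c)"
    by (cases i) (simp_all add: X1_def mult_single add_Pair)
  moreover have "X2 * Poly_Mapping.single (i, j - 1, k) (of_nat j * c) = Poly_Mapping.single (i,j,k) (of_nat j * c)"
    by (cases j) (simp_all add: X2_def mult_single add_Pair)
  moreover have "X3 * Poly_Mapping.single (i, j, k - 1) (of_nat k * c) = Poly_Mapping.single (i,j,k) (of_nat k * c)"
    by (cases k) (simp_all add: X3_def mult_single add_Pair)
  ultimately show ?thesis unfolding t dx_single dy_single dz_single const_mult_single
    by (simp add: single_add[symmetric] monom_degree_def algebra_simps)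
qed

lemma euler:
  assumes "homog r q"
  shows "X1 * dx q + X2 * dy q + X3 * dz q = const (of_nat r) * q"
proof -
  let ?E = "\<lambda>q. X1 * dx q + X2 * dy q + X3 * dz q"
  have "?E q = sum_keys (\<lambda>t a. ?E (Poly_Mapping.single t a)) q"
    by (rule additive_eq_sum_keys) (simp add: dx_add dy_add dz_add algebra_simps)
  also have "\<dots> = (\<Sum>t\<in>Poly_Mapping.keys q. const (of_nat r) * Poly_Mapping.single t (Poly_Mapping.lookup q t))"
    unfolding sum_keys_def euler_single using assms by (intro sum.cong) (auto simp: homog_iff)
  also have "\<dots> = const (of_nat r) * q"
    by (subst (2) poly_mapping_sum_singles) (simp add: sum_distrib_left)
  finally show ?thesis .
qed

definition dir_deriv :: "poly3 \<times> poly3 \<times> poly3 \<Rightarrow> poly3 \<Rightarrow> poly3" where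
  "dir_deriv \<rho> q = (case \<rho> of (a,b,c) \<Rightarrow> a * dx q + b * dy q + c * dz q)"

lemma AR_iff_dir_deriv: "\<rho> \<in> AR f \<longleftrightarrow> dir_deriv \<rho> f = 0"
  by (cases \<rho>) (simp add: AR_def dir_deriv_def)

lemma dir_deriv_mult: "dir_deriv \<rho> (q * r) = dir_deriv \<rho> q * r + q * dir_deriv \<rho> r"
  by (cases \<rho>) (simp add: dir_deriv_def dx_mult dy_mult dz_mult algebra_simps)

lemma dir_deriv_linform: "dir_deriv (r1,r2,r3) (linform (a,b,c)) = r1 * const a + r2 * const b + r3 * const c"
  by (simp add: dir_deriv_def linform_def dx_add dy_add dz_add dx_single dy_single dz_single const_def)

lemma dir_deriv_add3: "dir_deriv (add3 x y) q = dir_deriv x q + dir_deriv y q"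
  by (cases x; cases y) (simp add: dir_deriv_def add3_def algebra_simps)

lemma dir_deriv_smul3: "dir_deriv (smul3 g x) q = g * dir_deriv x q"
  by (cases x) (simp add: dir_deriv_def smul3_def algebra_simps)

lemma AR_lincomb: "x \<in> AR f \<Longrightarrow> y \<in> AR f \<Longrightarrow> add3 (smul3 a x) (smul3 b y) \<in> AR f"
  by (simp add: AR_iff_dir_deriv dir_deriv_add3 dir_deriv_smul3)

section \<open>Linear forms and line arrangements\<close>

lemma lookup_linform:
  "Poly_Mapping.lookup (linform (a,b,c)) (1,0,0) = a"
  "Poly_Mapping.lookup (linform (a,b,c)) (0,1,0) = b"
  "Poly_Mapping.lookup (linform (a,b,c)) (0,0,1) = c"
  by (simp_all add: linform_def lookup_add lookup_single)

lemma linform_inj: "linform v = linform w \<Longrightarrow> v = w"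
  by (metis lookup_linform prod_cases3)

lemma linform_eq_0_iff: "linform v = 0 \<longleftrightarrow> v = (0,0,0)"
  using linform_inj[of v "(0,0,0)"] by (auto simp: linform_def)

lemma const_mult_linform: "const t * linform (a,b,c) = linform (t * a, t * b, t * c)"
  by (simp add: linform_eq const_mult algebra_simps)

lemma not_linform_dvd_1:
  assumes "v \<noteq> (0,0,0)"
  shows "\<not> linform v dvd 1"
proof
  assume "linform v dvd 1"
  then obtain q where "1 = linform v * q" ..
  moreover have "order_ge (1 + 0) (linform v * q)"
    by (rule order_ge_mult[OF homog_imp_order_ge[OF homog_linform] order_ge_0])
  ultimately have "(1::poly3) = 0"
    using homog_order_ge_eq_0[of 0 1 1] homog_const[of 1] by simp
  then show False by simp
qed

lemma linform_dvd_linform_imp_proportional: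
  assumes "u \<noteq> (0,0,0)" "w \<noteq> (0,0,0)" "linform u dvd linform w"
  shows "proportional u w"
proof -
  obtain q where q: "linform w = q * linform u"
    using assms(3) by (metis dvdE mult.commute)
  moreover have "linform u \<noteq> 0" using assms(1) linform_eq_0_iff by simp
  ultimately obtain c where c: "q = const c"
    using homog_quotient_const homog_linform by metis
  obtain a1 b1 c1 where u: "u = (a1,b1,c1)" by (cases u) auto
  have w: "w = (c * a1, c * b1, c * c1)"
    using q c u by (metis linform_inj const_mult_linform)
  then have "c \<noteq> 0" using assms(2) by auto
  then show ?thesis unfolding proportional_def u w by auto
qed

lemma linform_dvd_cross_eq:
  assumes "\<alpha> \<noteq> (0,0,0)" "\<beta> \<noteq> (0,0,0)" "\<not> proportional \<alpha> \<beta>"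
    and "s1 * linform \<beta> = s2 * linform \<alpha>"
  obtains u where "s1 = u * linform \<alpha>" "s2 = u * linform \<beta>"
proof -
  have "linform \<alpha> dvd s1 * linform \<beta>" unfolding assms(4) by simp
  moreover have "\<not> linform \<alpha> dvd linform \<beta>"
    using linform_dvd_linform_imp_proportional assms(1-3) by blast
  ultimately obtain u where u: "s1 = linform \<alpha> * u"
    using linform_dvd_mult[OF assms(1)] by blast
  then have "linform \<alpha> * (u * linform \<beta>) = linform \<alpha> * s2"
    using assms(4) by (simp add: algebra_simps)
  then have "s2 = u * linform \<beta>" using assms(1) linform_eq_0_iff by simp
  then show ?thesis using u by (intro that[of u]) (simp_all add: mult.commute)
qed

lemma line_arrangement_Cons:
  "line_arrangement (a # M) \<longleftrightarrow>
     a \<noteq> (0,0,0) \<and> (\<forall>w\<in>set M. \<not> proportional a w \<and> \<not> proportional w a) \<and> line_arrangement M"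
  unfolding line_arrangement_def
  by (auto simp: All_less_Suc2 all_set_conv_all_nth nth_Cons split: nat.splits)

lemma line_arrangement_filter: "line_arrangement L \<Longrightarrow> line_arrangement (filter P L)"
  by (induction L) (auto simp: line_arrangement_Cons)

lemma arr_poly_Nil [simp]: "arr_poly [] = 1"
  and arr_poly_Cons [simp]: "arr_poly (a # M) = linform a * arr_poly M"
  by (simp_all add: arr_poly_def)

lemma arr_poly_nonzero: "line_arrangement M \<Longrightarrow> arr_poly M \<noteq> 0"
  by (induction M) (auto simp: line_arrangement_Cons linform_eq_0_iff)

lemma arr_poly_filter_split: "arr_poly L = arr_poly (filter P L) * arr_poly (filter (\<lambda>x. \<not> P x) L)"
  by (induction L) (auto simp: algebra_simps)

lemma linform_dvd_arr_poly_imp: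
  assumes "v \<noteq> (0,0,0)" "linform v dvd arr_poly M"
  shows "\<exists>w\<in>set M. linform v dvd linform w"
  using assms(2)
proof (induction M)
  case Nil
  then show ?case using not_linform_dvd_1[OF assms(1)] by simp
next
  case (Cons a M)
  then show ?case using linform_dvd_mult[OF assms(1)] by auto
qed

lemma not_linform_dvd_arr_poly:
  assumes "v \<noteq> (0,0,0)" "\<forall>w\<in>set M. w \<noteq> (0,0,0) \<and> \<not> proportional v w"
  shows "\<not> linform v dvd arr_poly M"
  using linform_dvd_arr_poly_imp[OF assms(1)] assms(2) linform_dvd_linform_imp_proportional[OF assms(1)]
  by blast

lemma arr_poly_simple_factor:
  assumes "line_arrangement M" "l \<in> set M"
  obtains k where "arr_poly M = linform l * k" "\<not> linform l dvd k"
  using assms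
proof (induction M arbitrary: thesis)
  case (Cons a M)
  have a0: "a \<noteq> (0,0,0)" and a_M: "\<forall>w\<in>set M. \<not> proportional a w \<and> \<not> proportional w a"
    and M: "line_arrangement M"
    using Cons.prems(2) by (auto simp: line_arrangement_Cons)
  have M0: "\<forall>w\<in>set M. w \<noteq> (0,0,0)" using M by (simp add: line_arrangement_def)
  show ?case
  proof (cases "l = a")
    case True
    have "\<not> linform a dvd arr_poly M" using not_linform_dvd_arr_poly[OF a0] a_M M0 by blast
    then show ?thesis by (intro Cons.prems(1)[of "arr_poly M"]) (simp_all add: True)
  next
    case False
    then have lM: "l \<in> set M" using Cons.prems(3) by simp
    obtain k where k: "arr_poly M = linform l * k" "\<not> linform l dvd k"
      using Cons.IH[OF _ M lM] by blast
    have l0: "l \<noteq> (0,0,0)" using M0 lM by blast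
    have "\<not> linform l dvd linform a"
      using linform_dvd_linform_imp_proportional[OF l0 a0] a_M lM by blast
    then have "\<not> linform l dvd linform a * k" using linform_dvd_mult[OF l0] k(2) by blast
    moreover have "arr_poly (a # M) = linform l * (linform a * k)" using k(1) by (simp add: algebra_simps)
    ultimately show ?thesis using Cons.prems(1) by blast
  qed
qed simp

lemma arr_poly_dvdI:
  assumes "line_arrangement M" "\<forall>l\<in>set M. linform l dvd W"
  shows "arr_poly M dvd W"
  using assms
proof (induction M arbitrary: W)
  case (Cons a M)
  have a0: "a \<noteq> (0,0,0)" and a_M: "\<forall>w\<in>set M. \<not> proportional a w \<and> \<not> proportional w a"
    and M: "line_arrangement M"
    using Cons.prems(1) by (auto simp: line_arrangement_Cons)
  have M0: "\<forall>w\<in>set M. w \<noteq> (0,0,0)" using M by (simp add: line_arrangement_def)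
  have "arr_poly M dvd W" using Cons.IH[OF M] Cons.prems(2) by simp
  then obtain q where q: "W = arr_poly M * q" ..
  have "\<not> linform a dvd arr_poly M" using not_linform_dvd_arr_poly[OF a0] a_M M0 by blast
  moreover have "linform a dvd arr_poly M * q" using Cons.prems(2) q by simp
  ultimately obtain r where "q = linform a * r" using linform_dvd_mult[OF a0] by blast
  then have "W = arr_poly (a # M) * r" using q by (simp add: algebra_simps)
  then show ?case ..
qed simp

lemma on_line_iff: "on_line (p1,p2,p3) (a,b,c) \<longleftrightarrow> p1 * a + p2 * b + p3 * c = 0"
  by (simp add: on_line_def algebra_simps)

lemma dir_deriv_const_linform:
  "dir_deriv (const p1, const p2, const p3) (linform (a,b,c)) = const (p1 * a + p2 * b + p3 * c)"
  by (simp add: dir_deriv_linform const_add const_mult)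

lemma dir_deriv_arr_poly_through:
  assumes "\<forall>v\<in>set M. on_line (p1,p2,p3) v"
  shows "dir_deriv (const p1, const p2, const p3) (arr_poly M) = 0"
  using assms
proof (induction M)
  case Nil
  show ?case using dir_deriv_mult[of "(const p1, const p2, const p3)" 1 1] by simp
next
  case (Cons v M)
  obtain a b c where "v = (a,b,c)" by (cases v) auto
  then show ?case using Cons by (simp add: dir_deriv_mult dir_deriv_const_linform on_line_iff)
qed

section \<open>The determinant \<open>det(\<rho>, X, p)\<close>\<close>

definition detXp :: "complex \<times> complex \<times> complex \<Rightarrow> poly3 \<times> poly3 \<times> poly3 \<Rightarrow> poly3" where
  "detXp p \<rho> = (case p of (p1,p2,p3) \<Rightarrow> case \<rho> of (a,b,c) \<Rightarrow>
     a * (X2 * const p3 - X3 * const p2) + b * (X3 * const p1 - X1 * const p3)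
       + c * (X1 * const p2 - X2 * const p1))"

lemma detXp_lincomb: "detXp p (add3 (smul3 g x) (smul3 g' y)) = g * detXp p x + g' * detXp p y"
  by (cases p; cases x; cases y) (simp add: detXp_def add3_def smul3_def algebra_simps)

lemma homog_detXp:
  assumes "homog_syz f r \<rho>"
  shows "homog (r + 1) (detXp p \<rho>)"
proof -
  obtain a b c where \<rho>: "\<rho> = (a,b,c)" by (cases \<rho>) auto
  obtain p1 p2 p3 where p: "p = (p1,p2,p3)" by (cases p) auto
  have abc: "homog r a" "homog r b" "homog r c" using assms \<rho> by (auto simp: homog_syz_def)
  have lin: "homog 1 (Y * const x - Z * const y)" if "homog 1 Y" "homog 1 Z" for x y Y Z
    using that by (metis homog_const_mult homog_diff mult.commute)
  show ?thesis unfolding detXp_def \<rho> p prod.case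
    by (intro homog_add homog_mult abc lin homog_X1 homog_X2 homog_X3)
qed

lemma exists_dot_nonzero:
  assumes "(v1,v2,v3) \<noteq> (0::complex,0::complex,0::complex)"
  obtains w1 w2 w3 where "v1 * w1 + v2 * w2 + v3 * w3 \<noteq> 0"
proof -
  consider "v1 \<noteq> 0" | "v2 \<noteq> 0" | "v3 \<noteq> 0" using assms by auto
  then show ?thesis
    by cases (rule that[of 1 0 0] that[of 0 1 0] that[of 0 0 1], simp)+
qed

text \<open>Modulo a line \<open>\<ell> = v\<cdot>X\<close> through \<open>p\<close> dividing \<open>F\<close> simply, all three rows \<open>\<rho>, X, p\<close> of
 the determinant are orthogonal to \<open>v\<close>: \<open>\<rho>\<cdot>v = \<rho>\<cdot>\<nabla>\<ell>\<close> vanishes mod \<open>\<ell>\<close> because \<open>\<rho>\<cdot>\<nabla>F = 0\<close>,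
 \<open>X\<cdot>v = \<ell>\<close> and \<open>p\<cdot>v = 0\<close>. The identity
 \<open>det(\<rho>,X,p) (v\<cdot>w) = (\<rho>\<cdot>v) det(w,X,p) + (X\<cdot>v) det(\<rho>,w,p) + (p\<cdot>v) det(\<rho>,X,w)\<close>
 then shows that the determinant vanishes mod \<open>\<ell>\<close>.\<close>

lemma linform_dvd_detXp:
  assumes v0: "v \<noteq> (0,0,0)" and on: "on_line p v"
    and F: "F = linform v * k" and simple: "\<not> linform v dvd k" and syz: "dir_deriv \<rho> F = 0"
  shows "linform v dvd detXp p \<rho>"
proof -
  obtain a b c where \<rho>: "\<rho> = (a,b,c)" by (cases \<rho>) auto
  obtain v1 v2 v3 where v: "v = (v1,v2,v3)" by (cases v) auto
  obtain p1 p2 p3 where p: "p = (p1,p2,p3)" by (cases p) auto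
  obtain w1 w2 w3 where N: "v1 * w1 + v2 * w2 + v3 * w3 \<noteq> 0"
    using exists_dot_nonzero v0 v by metis
  let ?l = "linform v" and ?s = "dir_deriv \<rho> (linform v)"
  have "?s * k = ?l * (- dir_deriv \<rho> k)"
    using syz unfolding F dir_deriv_mult by (simp add: eq_neg_iff_add_eq_0)
  then have "?l dvd ?s * k" by (metis dvdI)
  then have "?l dvd ?s" using linform_dvd_mult[OF v0] simple by blast
  have "p1 * v1 + p2 * v2 + p3 * v3 = 0" using on p v by (simp add: on_line_iff)
  define A where "A = detXp p (const w1, const w2, const w3)"
  define B where "B = (const p2 * c - const p3 * b) * const w1 + (const p3 * a - const p1 * c) * const w2
    + (const p1 * b - const p2 * a) * const w3"
  define C where "C = (b * X3 - c * X2) * const w1 + (c * X1 - a * X3) * const w2 + (a * X2 - b * X1) * const w3"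
  have "detXp p \<rho> * const (v1 * w1 + v2 * w2 + v3 * w3)
      = ?s * A + ?l * B + const (p1 * v1 + p2 * v2 + p3 * v3) * C"
    unfolding A_def B_def C_def \<rho> p v detXp_def dir_deriv_linform unfolding linform_eq
    by (simp add: const_add const_mult algebra_simps)
  then have "?l dvd detXp p \<rho> * const (v1 * w1 + v2 * w2 + v3 * w3)"
    using \<open>?l dvd ?s\<close> \<open>p1 * v1 + p2 * v2 + p3 * v3 = 0\<close> by simp
  then have "?l dvd detXp p \<rho> * (const (v1 * w1 + v2 * w2 + v3 * w3) * const (1 / (v1 * w1 + v2 * w2 + v3 * w3)))"
    by (metis dvd_mult2 mult.assoc)
  then show ?thesis using const_mult_inverse[OF N] by simp
qed

text \<open>The kernel of \<open>\<rho> \<mapsto> det(\<rho>, X, p)\<close> when the coordinate \<open>q\<close> of \<open>p\<close> is invertible; it is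
 applied to a nonzero coordinate of \<open>p\<close>, with the variables permuted accordingly.\<close>

lemma detXp_kernel_pivot:
  fixes a b c x y z q q1 q2 r :: poly3
  assumes qr: "q * r = 1"
    and \<alpha>\<beta>: "\<alpha> \<noteq> (0,0,0)" "\<beta> \<noteq> (0,0,0)" "\<not> proportional \<alpha> \<beta>"
    and \<alpha>: "linform \<alpha> = q * x - q1 * z" and \<beta>: "linform \<beta> = q * y - q2 * z"
    and det: "a * (q * y - q2 * z) - b * (q * x - q1 * z) + c * (q2 * x - q1 * y) = 0"
  shows "\<exists>u w. a = u * x + w * q1 \<and> b = u * y + w * q2 \<and> c = u * z + w * q"
proof -
  have "(q * a - c * q1) * (q * y - q2 * z) - (q * b - c * q2) * (q * x - q1 * z)
      = q * (a * (q * y - q2 * z) - b * (q * x - q1 * z) + c * (q2 * x - q1 * y))"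
    by (simp add: algebra_simps)
  then have "(q * a - c * q1) * linform \<beta> = (q * b - c * q2) * linform \<alpha>"
    unfolding \<alpha> \<beta> det by simp
  then obtain u where u: "q * a - c * q1 = u * (q * x - q1 * z)" "q * b - c * q2 = u * (q * y - q2 * z)"
    using linform_dvd_cross_eq[OF \<alpha>\<beta>] unfolding \<alpha> \<beta> by metis
  have solve: "s = u * t + (c - u * z) * r * q'" if "q * s - c * q' = u * (q * t - q' * z)" for s t q'
  proof -
    have "s = (q * s - c * q') * r + c * q' * r" using qr by (simp add: algebra_simps)
    also have "\<dots> = u * t * (q * r) + (c - u * z) * r * q'" unfolding that by (simp add: algebra_simps)
    finally show ?thesis using qr by simp
  qed
  have "c = u * z + (c - u * z) * r * q" using qr by (simp add: algebra_simps)
  then show ?thesis using solve[OF u(1)] solve[OF u(2)] by blast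
qed

section \<open>Syzygies of an arrangement relative to one of its points\<close>

locale arrangement_point =
  fixes L :: "(complex \<times> complex \<times> complex) list" and p1 p2 p3 :: complex
  assumes line_arrangement: "line_arrangement L" and p_nonzero: "(p1,p2,p3) \<noteq> (0,0,0)"
    and two_lines_through: "2 \<le> length (filter (on_line (p1,p2,p3)) L)"
begin

definition "lines_through = filter (on_line (p1,p2,p3)) L"
definition "lines_off = filter (\<lambda>v. \<not> on_line (p1,p2,p3) v) L"
definition "f = arr_poly L"
definition "g = arr_poly lines_through"
definition "h = arr_poly lines_off"
definition "d = length L"
definition "m = length lines_through"
definition "q1 = const p1"
definition "q2 = const p2"
definition "q3 = const p3"
definition "W \<rho> = detXp (p1,p2,p3) \<rho>"

definition "dph = dir_deriv (q1,q2,q3) h"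

text \<open>Euler's formula \<open>X\<cdot>\<nabla>f = d f\<close> and \<open>p\<cdot>\<nabla>f = g \<partial>\<^sub>p h\<close> combine to the syzygy
 \<open>\<delta> = (\<partial>\<^sub>p h) X - d h p\<close>.\<close>
definition "delta = (dph * X1 - const (of_nat d) * h * q1, dph * X2 - const (of_nat d) * h * q2,
                     dph * X3 - const (of_nat d) * h * q3)"

lemma f_eq: "f = g * h"
  unfolding f_def g_def h_def lines_through_def lines_off_def by (rule arr_poly_filter_split)

lemma d_eq: "d = m + length lines_off"
  unfolding d_def m_def lines_through_def lines_off_def by (simp add: sum_length_filter_compl)

lemma m_ge_2: "2 \<le> m"
  using two_lines_through by (simp add: m_def lines_through_def)

lemma d_pos: "0 < d"
  using d_eq m_ge_2 by simp

lemma const_d_inverse: "const (of_nat d) * const (1 / of_nat d) = 1"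
  using d_pos by (intro const_mult_inverse) simp

lemma line_arrangement_through: "line_arrangement lines_through"
  and line_arrangement_off: "line_arrangement lines_off"
  unfolding lines_through_def lines_off_def using line_arrangement by (simp_all add: line_arrangement_filter)

lemma g_nonzero: "g \<noteq> 0"
  unfolding g_def using line_arrangement_through by (rule arr_poly_nonzero)

lemma h_nonzero: "h \<noteq> 0"
  unfolding h_def using line_arrangement_off by (rule arr_poly_nonzero)

lemma homog_g: "homog m g"
  unfolding g_def m_def by (rule homog_arr_poly)

lemma homog_h: "homog (d - m) h"
  unfolding h_def using d_eq homog_arr_poly[of lines_off] by simp

lemma homog_dph: "homog (d - m - 1) dph"
  unfolding dph_def dir_deriv_def q1_def q2_def q3_def prod.case
  by (intro homog_add homog_const_mult homog_dx homog_dy homog_dz homog_h)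

lemma dir_deriv_p_f: "dir_deriv (q1,q2,q3) f = g * dph"
proof -
  have "dir_deriv (q1,q2,q3) g = 0"
    unfolding g_def q1_def q2_def q3_def lines_through_def by (rule dir_deriv_arr_poly_through) simp
  then show ?thesis unfolding f_eq dph_def by (simp add: dir_deriv_mult)
qed

lemma dir_deriv_X_f: "dir_deriv (X1,X2,X3) f = const (of_nat d) * f"
  using euler[OF homog_arr_poly[of L]] by (simp add: dir_deriv_def f_def d_def)

lemma delta_AR: "delta \<in> AR f"
proof -
  have "dir_deriv delta f = dph * dir_deriv (X1,X2,X3) f - const (of_nat d) * h * dir_deriv (q1,q2,q3) f"
    unfolding delta_def by (simp add: dir_deriv_def algebra_simps)
  also have "\<dots> = 0" unfolding dir_deriv_X_f dir_deriv_p_f by (simp add: f_eq algebra_simps)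
  finally show ?thesis by (simp add: AR_iff_dir_deriv)
qed

lemma homog_dph_mult_X:
  assumes "homog 1 X"
  shows "homog (d - m) (dph * X)"
proof (cases "d - m = 0")
  case True
  \<comment> \<open>\<open>h\<close> is a constant and \<open>dph = 0\<close>; the degree \<open>d - m - 1\<close> of \<open>homog_dph\<close> is truncated here\<close>
  then show ?thesis
    using homog_0_imp_dx_dy_dz_0 homog_h by (simp add: dph_def dir_deriv_def)
next
  case False
  then have "d - m - 1 + 1 = d - m" by simp
  then show ?thesis using homog_mult[OF homog_dph assms] by simp
qed

lemma homog_syz_delta: "homog_syz f (d - m) delta"
proof -
  have "homog (d - m) (const (of_nat d) * h * const c)" for c
    using homog_const_mult[OF homog_const_mult[OF homog_h]] by (simp add: algebra_simps)
  then show ?thesis unfolding homog_syz_def delta_def q1_def q2_def q3_def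
    using delta_AR by (auto simp: delta_def q1_def q2_def q3_def
        intro!: homog_diff homog_dph_mult_X homog_X1 homog_X2 homog_X3)
qed

lemma delta_nonzero: "delta \<noteq> (0,0,0)"
proof
  assume "delta = (0,0,0)"
  then have e: "dph * X1 = const (of_nat d) * h * q1" "dph * X2 = const (of_nat d) * h * q2"
    "dph * X3 = const (of_nat d) * h * q3"
    by (auto simp: delta_def)
  have dh: "const (of_nat d) * h \<noteq> 0" using d_pos h_nonzero by simp
  show False
  proof (cases "dph = 0")
    case True
    then show False using e dh p_nonzero by (simp add: q1_def q2_def q3_def)
  next
    case False
    have "dph * linform (p2, - p1, 0) = const p2 * (dph * X1) - const p1 * (dph * X2)"
      and "dph * linform (p3, 0, - p1) = const p3 * (dph * X1) - const p1 * (dph * X3)"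
      by (simp_all add: linform_eq const_uminus algebra_simps)
    then have "dph * linform (p2, - p1, 0) = 0" "dph * linform (p3, 0, - p1) = 0"
      unfolding e by (simp_all add: q1_def q2_def q3_def algebra_simps)
    then show False using False p_nonzero by (simp add: linform_eq_0_iff)
  qed
qed

lemma W_delta: "W delta = 0"
  unfolding W_def delta_def detXp_def q1_def q2_def q3_def by (simp add: algebra_simps)

lemma W_eq_0_imp:
  assumes "W \<rho> = 0"
  shows "\<exists>u w. \<rho> = (u * X1 + w * q1, u * X2 + w * q2, u * X3 + w * q3)"
proof -
  obtain a b c where \<rho>: "\<rho> = (a,b,c)" by (cases \<rho>) auto
  have W: "a * (X2 * q3 - X3 * q2) + b * (X3 * q1 - X1 * q3) + c * (X1 * q2 - X2 * q1) = 0"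
    using assms by (simp add: W_def detXp_def \<rho> q1_def q2_def q3_def)
  consider "p3 \<noteq> 0" | "p2 \<noteq> 0" | "p1 \<noteq> 0" using p_nonzero by auto
  then show ?thesis
  proof cases
    case 1
    have "\<exists>u w. a = u * X1 + w * q1 \<and> b = u * X2 + w * q2 \<and> c = u * X3 + w * q3"
      by (rule detXp_kernel_pivot[where \<alpha> = "(p3, 0, - p1)" and \<beta> = "(0, p3, - p2)" and r = "const (1 / p3)"])
         (use 1 W in \<open>auto simp: q1_def q2_def q3_def const_mult_inverse linform_eq const_uminus
            proportional_def algebra_simps\<close>)
    then show ?thesis unfolding \<rho> by blast
  next
    case 2
    have "\<exists>u w. a = u * X1 + w * q1 \<and> c = u * X3 + w * q3 \<and> b = u * X2 + w * q2"
      by (rule detXp_kernel_pivot[where \<alpha> = "(p2, - p1, 0)" and \<beta> = "(0, - p3, p2)" and r = "const (1 / p2)"])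
         (use 2 W in \<open>auto simp: q1_def q2_def q3_def const_mult_inverse linform_eq const_uminus
            proportional_def algebra_simps\<close>)
    then show ?thesis unfolding \<rho> by blast
  next
    case 3
    have "\<exists>u w. b = u * X2 + w * q2 \<and> c = u * X3 + w * q3 \<and> a = u * X1 + w * q1"
      by (rule detXp_kernel_pivot[where \<alpha> = "(- p2, p1, 0)" and \<beta> = "(- p3, 0, p1)" and r = "const (1 / p1)"])
         (use 3 W in \<open>auto simp: q1_def q2_def q3_def const_mult_inverse linform_eq const_uminus
            proportional_def algebra_simps\<close>)
    then show ?thesis unfolding \<rho> by blast
  qed
qed

text \<open>For a line \<open>\<ell>\<close> not through \<open>p\<close>, \<open>\<partial>\<^sub>p \<ell> = \<ell>(p)\<close> is a nonzero constant, so
 \<open>\<partial>\<^sub>p h \<equiv> \<ell>(p) h/\<ell>\<close> modulo \<open>\<ell>\<close>; hence no factor of \<open>h\<close> divides \<open>\<partial>\<^sub>p h\<close>.\<close>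

lemma h_dvd_mult_dph_imp_dvd:
  assumes "h dvd w * dph"
  shows "h dvd w"
  unfolding h_def
proof (rule arr_poly_dvdI[OF line_arrangement_off], rule ballI)
  fix l assume l_off: "l \<in> set lines_off"
  then have off: "\<not> on_line (p1,p2,p3) l" by (simp add: lines_off_def)
  have l0: "l \<noteq> (0,0,0)" using line_arrangement_off l_off by (simp add: line_arrangement_def)
  obtain k where k: "h = linform l * k" "\<not> linform l dvd k"
    using arr_poly_simple_factor[OF line_arrangement_off l_off] unfolding h_def by metis
  obtain a b c where l: "l = (a,b,c)" by (cases l) auto
  define lp where "lp = p1 * a + p2 * b + p3 * c"
  have lp0: "lp \<noteq> 0" using off l by (simp add: on_line_iff lp_def)
  have "dph = const lp * k + linform l * dir_deriv (q1,q2,q3) k"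
    unfolding dph_def k(1) dir_deriv_mult q1_def q2_def q3_def l dir_deriv_const_linform lp_def ..
  then have e: "w * dph = (w * k) * const lp + linform l * (w * dir_deriv (q1,q2,q3) k)"
    by (simp add: algebra_simps)
  have "linform l dvd w * dph" using assms k(1) by (metis dvd_mult_left)
  then have "linform l dvd (w * k) * const lp" unfolding e by (simp add: dvd_add_left_iff)
  then have "linform l dvd (w * k) * (const lp * const (1 / lp))" by (metis dvd_mult2 mult.assoc)
  then have "linform l dvd w * k" using const_mult_inverse[OF lp0] by simp
  then show "linform l dvd w" using linform_dvd_mult[OF l0] k(2) by blast
qed

lemma W_eq_0_imp_multiple_delta:
  assumes "\<rho> \<in> AR f" "W \<rho> = 0"
  obtains v where "\<rho> = smul3 v delta"
proof -
  let ?D = "const (of_nat d)"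
  obtain u w where \<rho>: "\<rho> = (u * X1 + w * q1, u * X2 + w * q2, u * X3 + w * q3)"
    using W_eq_0_imp[OF assms(2)] by blast
  have "dir_deriv \<rho> f = u * dir_deriv (X1,X2,X3) f + w * dir_deriv (q1,q2,q3) f"
    unfolding \<rho> by (simp add: dir_deriv_def algebra_simps)
  also have "\<dots> = g * (u * ?D * h + w * dph)"
    unfolding dir_deriv_X_f dir_deriv_p_f by (simp add: f_eq algebra_simps)
  finally have e: "u * ?D * h + w * dph = 0"
    using assms(1) g_nonzero by (simp add: AR_iff_dir_deriv)
  then have "w * dph = h * (- (u * ?D))" by (simp add: algebra_simps eq_neg_iff_add_eq_0)
  then have "h dvd w * dph" by simp
  then obtain v where w: "w = h * v" using h_dvd_mult_dph_imp_dvd by blast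
  have "h * (u * ?D + v * dph) = 0" using e unfolding w by (simp add: algebra_simps)
  then have "u * ?D = - (v * dph)" using h_nonzero by (simp add: eq_neg_iff_add_eq_0)
  then have "u * ?D * const (1 / of_nat d) = - (v * dph) * const (1 / of_nat d)" by simp
  then have u: "u = - (v * dph * const (1 / of_nat d))"
    using const_d_inverse by (simp add: mult.assoc)
  have "u * X + w * q = - (v * const (1 / of_nat d)) * (dph * X - ?D * h * q)" for X q
    unfolding u w using const_d_inverse by (simp add: algebra_simps)
  then have "\<rho> = smul3 (- (v * const (1 / of_nat d))) delta"
    unfolding \<rho> delta_def smul3_def by simp
  then show ?thesis by (rule that)
qed

lemma multiple_delta_degree_ge:
  assumes "homog_syz f r (smul3 v delta)" "smul3 v delta \<noteq> (0,0,0)"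
  shows "d - m \<le> r"
proof -
  obtain e1 e2 e3 where e: "delta = (e1,e2,e3)" by (cases delta) auto
  have "homog (d - m) e1" "homog (d - m) e2" "homog (d - m) e3"
    using homog_syz_delta e by (auto simp: homog_syz_def)
  moreover have "homog r (v * e1)" "homog r (v * e2)" "homog r (v * e3)"
    using assms(1) e by (auto simp: homog_syz_def smul3_def)
  moreover have "v * e1 \<noteq> 0 \<or> v * e2 \<noteq> 0 \<or> v * e3 \<noteq> 0"
    using assms(2) e by (auto simp: smul3_def)
  ultimately show ?thesis using homog_factor_degree_le by metis
qed

lemma W_nonzero_if_degree_lt:
  assumes "homog_syz f r \<rho>" "\<rho> \<noteq> (0,0,0)" "r < d - m"
  shows "W \<rho> \<noteq> 0"
proof
  assume "W \<rho> = 0"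
  moreover have "\<rho> \<in> AR f" using assms(1) by (simp add: homog_syz_def)
  ultimately obtain v where "\<rho> = smul3 v delta" using W_eq_0_imp_multiple_delta by metis
  then show False using multiple_delta_degree_ge assms by fastforce
qed

lemma g_dvd_W:
  assumes "\<rho> \<in> AR f"
  shows "g dvd W \<rho>"
  unfolding g_def
proof (rule arr_poly_dvdI[OF line_arrangement_through], rule ballI)
  fix l assume "l \<in> set lines_through"
  then have lL: "l \<in> set L" and on: "on_line (p1,p2,p3) l" by (auto simp: lines_through_def)
  have l0: "l \<noteq> (0,0,0)" using line_arrangement lL by (simp add: line_arrangement_def)
  obtain k where k: "arr_poly L = linform l * k" "\<not> linform l dvd k"
    using arr_poly_simple_factor[OF line_arrangement lL] by blast
  show "linform l dvd W \<rho>" unfolding W_def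
    by (rule linform_dvd_detXp[OF l0 on k]) (use assms in \<open>simp add: AR_iff_dir_deriv f_def\<close>)
qed

lemma generates_AR_if_W_eq_const_mult_g:
  assumes \<rho>: "\<rho> \<in> AR f" "W \<rho> = const c * g" "c \<noteq> 0" and s: "s \<in> AR f"
  shows "\<exists>g1 g2. s = add3 (smul3 g1 \<rho>) (smul3 g2 delta)"
proof -
  obtain \<nu> where \<nu>: "W s = \<nu> * g" using g_dvd_W[OF s] by (metis dvdE mult.commute)
  define k where "k = \<nu> * const (1 / c)"
  define s' where "s' = add3 (smul3 1 s) (smul3 (- k) \<rho>)"
  have "W s' = \<nu> * g - \<nu> * (const c * const (1 / c)) * g"
    unfolding s'_def W_def detXp_lincomb using \<nu> \<rho>(2) by (simp add: W_def k_def algebra_simps)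
  then have "W s' = 0" using const_mult_inverse[OF \<rho>(3)] by simp
  moreover have "s' \<in> AR f" unfolding s'_def using s \<rho>(1) by (rule AR_lincomb)
  ultimately obtain v where "s' = smul3 v delta" using W_eq_0_imp_multiple_delta by metis
  then have "s = add3 (smul3 k \<rho>) (smul3 v delta)"
    unfolding s'_def by (cases s; cases \<rho>; cases delta) (simp add: add3_def smul3_def algebra_simps)
  then show ?thesis by blast
qed

lemma independent_if_W_eq_const_mult_g:
  assumes \<rho>: "W \<rho> = const c * g" "c \<noteq> 0"
    and z: "add3 (smul3 g1 \<rho>) (smul3 g2 delta) = (0,0,0)"
  shows "g1 = 0 \<and> g2 = 0"
proof -
  have "g1 * W \<rho> + g2 * W delta = 0"
    using arg_cong[OF z, of W] unfolding W_def detXp_lincomb by (simp add: detXp_def)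
  then have "g1 * (const c * g) = 0" using W_delta \<rho>(1) by simp
  then have "g1 = 0" using \<rho>(2) g_nonzero by simp
  then have "smul3 g2 delta = (0,0,0)" using z by (cases \<rho>; cases delta) (simp add: add3_def smul3_def)
  then have "g2 = 0" using delta_nonzero by (cases delta) (auto simp: smul3_def)
  then show ?thesis using \<open>g1 = 0\<close> by simp
qed

lemma free_if_syzygy_of_degree_m_minus_1:
  assumes \<rho>: "homog_syz f (m - 1) \<rho>" "\<rho> \<noteq> (0,0,0)" and lt: "m - 1 < d - m"
  shows "free_with_exponents f (m - 1) (d - m)"
proof -
  have \<rho>_AR: "\<rho> \<in> AR f" using \<rho>(1) by (simp add: homog_syz_def)
  obtain \<mu> where \<mu>: "W \<rho> = \<mu> * g" using g_dvd_W[OF \<rho>_AR] by (metis dvdE mult.commute)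
  moreover have "homog m (W \<rho>)" using homog_detXp[OF \<rho>(1)] m_ge_2 by (simp add: W_def)
  ultimately obtain c where c: "\<mu> = const c" using homog_quotient_const homog_g g_nonzero by metis
  have "c \<noteq> 0" using W_nonzero_if_degree_lt[OF \<rho> lt] \<mu> c by auto
  have W\<rho>: "W \<rho> = const c * g" using \<mu> c by simp
  show ?thesis unfolding free_with_exponents_def
    using lt \<rho>(1) homog_syz_delta generates_AR_if_W_eq_const_mult_g[OF \<rho>_AR W\<rho> \<open>c \<noteq> 0\<close>]
      independent_if_W_eq_const_mult_g[OF W\<rho> \<open>c \<noteq> 0\<close>]
    by (intro conjI exI[of _ \<rho>] exI[of _ delta]) auto
qed

lemma mdr_syzygy:
  obtains \<rho> where "homog_syz f (mdr f) \<rho>" "\<rho> \<noteq> (0,0,0)"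
  using LeastI[where P = "\<lambda>r. \<exists>s. homog_syz f r s \<and> s \<noteq> (0,0,0)", OF exI[of _ delta]]
    homog_syz_delta delta_nonzero unfolding mdr_def by blast

lemma mdr_le: "mdr f \<le> d - m"
  unfolding mdr_def using homog_syz_delta delta_nonzero by (blast intro: Least_le)

lemma mdr_ge:
  assumes "mdr f < d - m"
  shows "m - 1 \<le> mdr f"
proof -
  obtain \<rho> where \<rho>: "homog_syz f (mdr f) \<rho>" "\<rho> \<noteq> (0,0,0)" by (rule mdr_syzygy)
  then obtain \<mu> where "W \<rho> = \<mu> * g"
    using g_dvd_W by (metis dvdE homog_syz_def mult.commute)
  moreover have "W \<rho> \<noteq> 0" using W_nonzero_if_degree_lt[OF \<rho> assms] .
  moreover have "homog (mdr f + 1) (W \<rho>)" using homog_detXp[OF \<rho>(1)] by (simp add: W_def)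
  ultimately have "m \<le> mdr f + 1" using homog_factor_degree_le homog_g by metis
  then show ?thesis by simp
qed

end

theorem theorem1p2:
  fixes L :: "(complex \<times> complex \<times> complex) list" and p :: "complex \<times> complex \<times> complex"
    and d m :: nat
  assumes "line_arrangement L"
    and "d = length L"
    and "intersection_point L p"
    and "m = mult_pt L p"
  shows "mdr (arr_poly L) = d - m \<or>
    (mdr (arr_poly L) + 1 \<le> d - m \<and>
      ((mdr (arr_poly L) + 1 \<le> m \<and> mdr (arr_poly L) = m - 1 \<and> 2 * m < d + 1 \<and>
          free_with_exponents (arr_poly L) (m - 1) (d - m))
       \<or> (m \<le> mdr (arr_poly L) \<and> mdr (arr_poly L) + 1 \<le> d - m \<and> 2 * m < d)))"
proof -
  obtain p1 p2 p3 where p: "p = (p1,p2,p3)" by (cases p) auto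
  have mult: "mult_pt L p = length (filter (on_line p) L)"
    unfolding mult_pt_def by (simp add: length_filter_conv_card)
  interpret A: arrangement_point L p1 p2 p3
    using assms(1,3) p mult by unfold_locales (auto simp: intersection_point_def)
  have A: "A.f = arr_poly L" "A.d = d" "A.m = m"
    using assms(2,4) mult p by (simp_all add: A.f_def A.d_def A.m_def A.lines_through_def)
  consider "mdr A.f = A.d - A.m" | "mdr A.f < A.d - A.m" "A.m \<le> mdr A.f"
    | "mdr A.f < A.d - A.m" "mdr A.f = A.m - 1"
    using A.mdr_le A.mdr_ge by fastforce
  then show ?thesis
  proof cases
    case 3
    then obtain \<rho> where "homog_syz A.f (A.m - 1) \<rho>" "\<rho> \<noteq> (0,0,0)" by (metis A.mdr_syzygy)
    then have "free_with_exponents A.f (A.m - 1) (A.d - A.m)"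
      using A.free_if_syzygy_of_degree_m_minus_1 3 by simp
    then show ?thesis using 3 A A.m_ge_2 by auto
  qed (use A in auto)
qed

end
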